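(* Let $\{\mu_t\}$ be a free convolution semigroup, let $p(x,t)$ be a martingale polynomial for $\{\mu_t\}$, and let $g(x,t)$ satisfy $\partial_xg(x,t)=p(x,t)$ (so $g(\cdot,t)$ is a polynomial). Let $\nu\in\mathcal M_0$. Then for all $s,t\ge0$, \[ \langle D_{\mu_s}C_t(\nu),\,g(\cdot,t+s)\rangle=\langle\nu,\,g(\cdot,s)\rangle . \]
   Context: $\mathcal M$ is the space of linear functionals on $\mathbb C[x]$ with the weak-$*$ topology (convergence of every moment $\langle\cdot,x^n\rangle$), $\mathcal M_1=\{\nu:\langle\nu,1\rangle=1\}$, $\mathcal M_0=\{\nu:\langle\nu,1\rangle=0\}$. For unital $\nu$: $G_\nu(z)=\sum\langle\nu,x^n\rangle z^{-(n+1)}$, $K_\nu$ its compositional inverse, $R_\nu=K_\nu-\frac1z$; free convolution $\boxplus$ on $\mathcal M_1$ is defined by $R_{\mu\boxplus\nu}=R_\mu+R_\nu$. $\mu$ is a freely infinitely divisible probability measure with all moments finite and $\{\mu_t\}$ the free convolution semigroup with $\mu_1=\mu$, $R_{\mu_t}=tR_\mu$. $C_t:\mathcal M_1\to\mathcal M_1$ is $C_t(\tau)=\mu_t\boxplus\tau$, and for $\tau\in\mathcal M_1,\nu\in\mathcal M_0$, $D_\tau C_t(\nu)=\lim_{\varepsilon\to0}\frac1\varepsilon(C_t(\tau+\varepsilon\nu)-C_t(\tau))\in\mathcal M_0$ (Gâteaux derivative in the weak-$*$ topology). Martingale polynomial: $p(x,t)$ polynomial in $x$ with $\mathcal K_{s,t}(p(\cdot,t))=p(\cdot,s)$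 for $s<t$, where $\mathcal K_{s,t}$ is the linear operator on $\mathbb C[x]$ determined coefficientwise (as formal series in $z^{-1}$) by $\mathcal K_{s,t}(\mathrm{Res}_z)=\mathrm{Res}_{F_{s,t}(z)}$, $\mathrm{Res}_z(x)=\frac1{z-x}$, $F_{s,t}=K_{\mu_s}\circ G_{\mu_t}$. *)

theory Defs
  imports "HOL-Probability.Probability" "HOL-Computational_Algebra.Polynomial"
    "HOL-Computational_Algebra.Formal_Power_Series"
begin

text \<open>A linear functional on C[x] is identified with its moment sequence
  n \<mapsto> <nu, x^n>.\<close>
type_synonym functional = "nat \<Rightarrow> complex"

definition unital :: "functional \<Rightarrow> bool" where
  "unital m \<longleftrightarrow> m 0 = 1"

definition centered :: "functional \<Rightarrow> bool" where
  "centered m \<longleftrightarrow> m 0 = 0"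

definition pair :: "functional \<Rightarrow> complex poly \<Rightarrow> complex" where
  "pair m q = (\<Sum>n\<le>degree q. coeff q n * m n)"

text \<open>Cauchy transform in the variable w = 1/z:
  G_nu(1/w) = sum_n m_n w^(n+1), a power series with constant term 0.\<close>
definition G_fps :: "functional \<Rightarrow> complex fps" where
  "G_fps m = Abs_fps (\<lambda>n. if n = 0 then 0 else m (n - 1))"

text \<open>K_nu is the compositional inverse of G_nu. In w: if h = fps_inv (G_fps m),
  then K_nu(w) = 1/h(w), and R_nu(w) = K_nu(w) - 1/w = (X/h - 1)/X.\<close>
definition R_fps :: "functional \<Rightarrow> complex fps" where
  "R_fps m = fps_shift 1 (inverse (fps_shift 1 (fps_inv (G_fps m))) - 1)"

definition free_conv :: "functional \<Rightarrow> functional \<Rightarrow> functional" where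
  "free_conv a b = (THE c. unital c \<and> R_fps c = R_fps a + R_fps b)"

definition free_semigroup :: "functional \<Rightarrow> real \<Rightarrow> functional" where
  "free_semigroup \<mu> t = (THE c. unital c \<and> R_fps c = fps_const (complex_of_real t) * R_fps \<mu>)"

definition Cmap :: "functional \<Rightarrow> real \<Rightarrow> functional \<Rightarrow> functional" where
  "Cmap \<mu> t \<tau> = free_conv (free_semigroup \<mu> t) \<tau>"

text \<open>D is the Gateaux derivative of C_t at tau in direction nu (weak-* topology,
  i.e. convergence of every moment).\<close>
definition has_gateaux_deriv ::
  "functional \<Rightarrow> real \<Rightarrow> functional \<Rightarrow> functional \<Rightarrow> functional \<Rightarrow> bool" where
  "has_gateaux_deriv \<mu> t \<tau> \<nu> D \<longleftrightarrow>
     (\<forall>n. ((\<lambda>\<epsilon>::real. (Cmap \<mu> t (\<lambda>k. \<tau> k + complex_of_real \<epsilon> * \<nu> k) n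
                          - Cmap \<mu> t \<tau> n) / complex_of_real \<epsilon>) \<longlongrightarrow> D n) (at 0))"

definition prob_moments :: "functional \<Rightarrow> bool" where
  "prob_moments m \<longleftrightarrow> (\<exists>M :: real measure. prob_space M \<and> sets M = sets borel \<and>
      (\<forall>k. integrable M (\<lambda>x. x ^ k)) \<and>
      (\<forall>k. m k = complex_of_real (\<integral>x. x ^ k \<partial>M)))"

definition freely_inf_div :: "functional \<Rightarrow> bool" where
  "freely_inf_div \<mu> \<longleftrightarrow> prob_moments \<mu> \<and>
     (\<forall>n::nat. n \<ge> 1 \<longrightarrow> (\<exists>\<nu>. prob_moments \<nu> \<and>
        fps_const (of_nat n) * R_fps \<nu> = R_fps \<mu>))"

definition lift_fps :: "complex fps \<Rightarrow> complex poly fps" where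
  "lift_fps f = Abs_fps (\<lambda>n. [: fps_nth f n :])"

text \<open>F_{s,t} = K_{mu_s} o G_{mu_t}. With w = 1/z and g = G_{mu_t}(1/w):
  F_{s,t}(1/w) = 1/g + R_{mu_s}(g), hence
  1/(F_{s,t}(z) - x) = g / (1 + g * (R_{mu_s} oo g) - x g).
  The series sum_n K_{s,t}(x^n) z^{-(n+1)} equals this, i.e. with
  c = sum_n K_{s,t}(x^n) w^n:  X * c * (1 + g (R_s oo g) - x g) = g.\<close>
definition kernel_coeffs :: "functional \<Rightarrow> real \<Rightarrow> real \<Rightarrow> complex poly fps" where
  "kernel_coeffs \<mu> s t =
     (let g = G_fps (free_semigroup \<mu> t);
          den = 1 + lift_fps (g * (R_fps (free_semigroup \<mu> s) oo g)) - fps_const [:0, 1:] * lift_fps g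
      in THE c. fps_X * c * den = lift_fps g)"

definition Kop :: "functional \<Rightarrow> real \<Rightarrow> real \<Rightarrow> complex poly \<Rightarrow> complex poly" where
  "Kop \<mu> s t q = (\<Sum>n\<le>degree q. smult (coeff q n) (fps_nth (kernel_coeffs \<mu> s t) n))"

definition martingale_poly :: "functional \<Rightarrow> (real \<Rightarrow> complex poly) \<Rightarrow> bool" where
  "martingale_poly \<mu> p \<longleftrightarrow> (\<forall>s t. 0 \<le> s \<and> s < t \<longrightarrow> Kop \<mu> s t (p t) = p s)"

end

theory Submission
  imports Defs
begin

(* Generating series are taken in the variable w = 1/z, so G_m = sum_n m_n w^(n+1).
  The R-transform is a bijection from unital functionals onto power series, hence free
  convolution is well defined, and c = a boxplus b is subordinated to b:
  fps_inv G_b o G_c = w / (1 - w R_a(G_c)) =: omega, so that G_c = G_b o omega.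

  For rho_e = mu_t boxplus (tau + e nu) this is a fixed point equation
  G(rho_e) = (G_tau + e G_nu) o omega_e whose n-th coefficient involves only lower
  coefficients of G(rho_e).  By induction all coefficients are differentiable in e, and the
  derivative at e = 0 solves a linear equation whose solution is w^2 (N o Psi)', where
  G_nu = w^2 N' and Psi = fps_inv G_tau o G(rho_0), i.e. 1/F_{s,t+s}(1/w) when tau = mu_s.

  On the other hand <m, K_{s,t}(x^j)> is the coefficient of w^(j+1) in G_m o Psi.  Pairing the
  derivative with g(t+s) therefore gives <nu', K_{s,t+s}(p(t+s))>, where nu' is the
  functional q |-> <nu, integral of q>, and the martingale property turns this into
  <nu', p(s)> = <nu, g(s)>. *)

unbundle no vec_syntax
notation fps_nth (infixl "$" 75)

section \<open>Formal power series\<close>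

lemma fps_X_mult_fps_shift_1:
  fixes f :: "'a::comm_ring_1 fps"
  assumes "f $ 0 = 0"
  shows "fps_X * fps_shift 1 f = f"
proof (rule fps_ext)
  fix n show "(fps_X * fps_shift 1 f) $ n = f $ n" using assms by (cases n) simp_all
qed

lemma fps_inv_nth_0 [simp]: "fps_inv a $ 0 = 0"
  by (simp add: fps_inv_def)

lemma fps_inv_nth_1: "a $ 0 = 0 \<Longrightarrow> fps_inv a $ Suc 0 = 1 / a $ Suc 0"
  by (simp add: fps_inv_def)

lemma fps_inv_fps_inv:
  fixes a :: "'a::field fps"
  assumes a0: "a $ 0 = 0" and a1: "a $ 1 \<noteq> 0"
  shows "fps_inv (fps_inv a) = a"
proof -
  have i0: "fps_inv a $ 0 = 0" and i1: "fps_inv a $ 1 \<noteq> 0"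
    using assms by (simp_all add: fps_inv_nth_1)
  have "fps_inv (fps_inv a) oo fps_inv a = a oo fps_inv a"
    using fps_inv[OF i0 i1] fps_inv_right[OF a0 a1] by simp
  then show ?thesis using fps_compose_inj_right[OF i0 i1] by blast
qed

lemma fps_inverse_one_minus_nth:
  fixes H :: "'a::field fps"
  assumes H0: "H $ 0 = 0"
  shows "inverse (1 - H) $ n = (\<Sum>k\<le>n. H ^ k) $ n"
proof -
  have "(\<Sum>k\<le>n. H ^ k) = inverse (1 - H) * ((1 - H) * (\<Sum>k<Suc n. H ^ k))"
    using H0 by (simp add: mult.assoc[symmetric] inverse_mult_eq_1 lessThan_Suc_atMost)
  also have "\<dots> = inverse (1 - H) * (1 - H ^ Suc n)"
    by (simp only: one_diff_power_eq)
  also have "\<dots> = inverse (1 - H) - inverse (1 - H) * H ^ Suc n"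
    by (simp add: algebra_simps)
  finally have "(\<Sum>k\<le>n. H ^ k) = inverse (1 - H) - inverse (1 - H) * H ^ Suc n" .
  moreover have "(inverse (1 - H) * H ^ Suc n) $ n = 0"
    unfolding fps_mult_nth using startsby_zero_power_prefix[OF H0, of "Suc n"]
    by (intro sum.neutral) auto
  ultimately show ?thesis by simp
qed

lemma fps_cutoff_eq_mono:
  "fps_cutoff n a = fps_cutoff n b \<Longrightarrow> m \<le> n \<Longrightarrow> fps_cutoff m a = fps_cutoff m b"
  by (simp add: fps_cutoff_eq_fps_cutoff_iff)

lemma fps_cutoff_mult_cong:
  fixes a a' b b' :: "'a::comm_ring_1 fps"
  assumes "fps_cutoff n a = fps_cutoff n a'" "fps_cutoff n b = fps_cutoff n b'"
  shows "fps_cutoff n (a * b) = fps_cutoff n (a' * b')"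
proof -
  have a: "\<forall>k<n. a $ k = a' $ k" and b: "\<forall>k<n. b $ k = b' $ k"
    using assms by (simp_all only: fps_cutoff_eq_fps_cutoff_iff)
  show ?thesis
    unfolding fps_cutoff_eq_fps_cutoff_iff fps_mult_nth
  proof (intro allI impI sum.cong refl)
    fix k i assume "k < n" "i \<in> {0..k}"
    then show "a $ i * b $ (k - i) = a' $ i * b' $ (k - i)"
      using a b by simp
  qed
qed

lemma fps_cutoff_power_cong:
  fixes a a' :: "'a::comm_ring_1 fps"
  assumes "fps_cutoff n a = fps_cutoff n a'"
  shows "fps_cutoff n (a ^ i) = fps_cutoff n (a' ^ i)"
proof (induction i)
  case (Suc i)
  then show ?case
    using fps_cutoff_mult_cong[OF assms Suc.IH] by simp
qed simp

lemma fps_cutoff_compose_cong: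
  fixes a a' b b' :: "'a::comm_ring_1 fps"
  assumes "fps_cutoff n a = fps_cutoff n a'" "fps_cutoff n b = fps_cutoff n b'"
  shows "fps_cutoff n (a oo b) = fps_cutoff n (a' oo b')"
proof -
  have b: "\<forall>k<n. (b ^ i) $ k = (b' ^ i) $ k" for i
    using fps_cutoff_power_cong[OF assms(2), of i] by (simp only: fps_cutoff_eq_fps_cutoff_iff)
  have a: "\<forall>k<n. a $ k = a' $ k"
    using assms(1) by (simp only: fps_cutoff_eq_fps_cutoff_iff)
  show ?thesis
    unfolding fps_cutoff_eq_fps_cutoff_iff fps_compose_nth
  proof (intro allI impI sum.cong refl)
    fix k i assume "k < n" "i \<in> {0..k}"
    then show "a $ i * (b ^ i) $ k = a' $ i * (b' ^ i) $ k"
      using a b by simp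
  qed
qed

lemma fps_cutoff_inverse_cong:
  fixes a b :: "'a::field fps"
  assumes ab: "fps_cutoff n a = fps_cutoff n b" and a0: "a $ 0 \<noteq> 0"
  shows "fps_cutoff n (inverse a) = fps_cutoff n (inverse b)"
proof (cases "n = 0")
  case False
  have "\<forall>k<n. a $ k = b $ k"
    using ab by (simp only: fps_cutoff_eq_fps_cutoff_iff)
  then have "b $ 0 \<noteq> 0"
    using a0 False by simp
  then show ?thesis
    using fps_cutoff_inverse[OF a0, of n] fps_cutoff_inverse[of b n] ab by simp
qed simp

lemma fps_cutoff_fps_X_mult_cong:
  fixes a b :: "'a::comm_ring_1 fps"
  assumes "fps_cutoff n a = fps_cutoff n b"
  shows "fps_cutoff (Suc n) (fps_X * a) = fps_cutoff (Suc n) (fps_X * b)"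
proof -
  have "\<forall>k<n. a $ k = b $ k"
    using assms by (simp only: fps_cutoff_eq_fps_cutoff_iff)
  then show ?thesis
    unfolding fps_cutoff_eq_fps_cutoff_iff by (auto simp: less_Suc_eq_0_disj)
qed

lemma fps_mult_nth_cutoff_cong:
  fixes U V B :: "'a::comm_ring_1 fps"
  assumes "fps_cutoff n U = fps_cutoff n V" and "B $ 0 = 0"
  shows "(U * B) $ n = (V * B) $ n"
proof -
  have "\<forall>k<n. U $ k = V $ k"
    using assms(1) by (simp only: fps_cutoff_eq_fps_cutoff_iff)
  then have "U $ i * B $ (n - i) = V $ i * B $ (n - i)" if "i \<le> n" for i
    using that assms(2) by (cases "i = n") simp_all
  then show ?thesis
    unfolding fps_mult_nth by (intro sum.cong) auto
qed

lemma fps_compose_deriv_nth_eq_sum: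
  fixes A B :: "'a::idom fps"
  assumes B0: "B $ 0 = 0" and k: "k < n"
  shows "(fps_deriv A oo B) $ k = (\<Sum>i=0..n. A $ i * (of_nat i * B ^ (i - 1)) $ k)"
proof -
  obtain m where n: "n = Suc m"
    using k by (cases n) auto
  have "(fps_deriv A oo B) $ k = (\<Sum>j=0..k. of_nat (j + 1) * A $ (j + 1) * (B ^ j) $ k)"
    by (simp add: fps_compose_nth)
  also have "\<dots> = (\<Sum>j=0..m. of_nat (j + 1) * A $ (j + 1) * (B ^ j) $ k)"
    by (rule sum.mono_neutral_left)
      (use k n startsby_zero_power_prefix[OF B0] in auto)
  also have "\<dots> = (\<Sum>i=0..n. of_nat i * A $ i * (B ^ (i - 1)) $ k)"
    unfolding n by (subst sum.atLeast0_atMost_Suc_shift) simp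
  also have "\<dots> = (\<Sum>i=0..n. A $ i * (of_nat i * B ^ (i - 1)) $ k)"
    by (simp add: ac_simps flip: fps_of_nat)
  finally show ?thesis .
qed

section \<open>The R-transform, free convolution and subordination\<close>

lemma G_fps_nth: "G_fps m $ n = (if n = 0 then 0 else m (n - 1))"
  by (simp add: G_fps_def)

lemma G_fps_nth_0 [simp]: "G_fps m $ 0 = 0"
  by (simp add: G_fps_def)

lemma G_fps_nth_1 [simp]: "unital m \<Longrightarrow> G_fps m $ Suc 0 = 1"
  by (simp add: G_fps_def unital_def)

lemma fps_inv_G_fps:
  assumes "unital m"
  shows "fps_inv (G_fps m) = fps_X * inverse (1 + fps_X * R_fps m)"
proof -
  define h where "h = fps_inv (G_fps m)"
  have h0: "h $ 0 = 0" and h1: "h $ Suc 0 = 1"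
    using assms by (simp_all add: h_def fps_inv_nth_1)
  have "fps_X * R_fps m = inverse (fps_shift 1 h) - 1"
    unfolding R_fps_def h_def[symmetric] by (rule fps_X_mult_fps_shift_1) (simp add: h1)
  then have "inverse (1 + fps_X * R_fps m) = inverse (inverse (fps_shift 1 h))"
    by simp
  also have "\<dots> = fps_shift 1 h"
    using h1 by (intro fps_inverse_idempotent) simp
  finally have "inverse (1 + fps_X * R_fps m) = fps_shift 1 h" .
  then show ?thesis
    using fps_X_mult_fps_shift_1[OF h0] by (simp add: h_def)
qed

lemma R_fps_inj:
  assumes "unital a" "unital b" "R_fps a = R_fps b"
  shows "a = b"
proof -
  have inv: "fps_inv (fps_inv (G_fps m)) = G_fps m" if "unital m" for m
    using fps_inv_fps_inv[of "G_fps m"] that by simp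
  have "fps_inv (G_fps a) = fps_inv (G_fps b)"
    using fps_inv_G_fps[OF assms(1)] fps_inv_G_fps[OF assms(2)] assms(3) by simp
  then have "G_fps a = G_fps b"
    using inv[OF assms(1)] inv[OF assms(2)] by metis
  then have "G_fps a $ Suc n = G_fps b $ Suc n" for n
    by simp
  then show ?thesis
    by (simp add: fun_eq_iff G_fps_nth)
qed

lemma R_fps_surj: "\<exists>c. unital c \<and> R_fps c = r"
proof -
  define h where "h = fps_X * inverse (1 + fps_X * r)"
  have h0: "h $ 0 = 0" and h1: "h $ Suc 0 = 1"
    by (simp_all add: h_def)
  define c where "c n = fps_inv h $ Suc n" for n
  have G: "G_fps c = fps_inv h"
    by (simp add: fps_eq_iff G_fps_nth c_def)
  have u: "unital c"
    by (simp add: unital_def c_def fps_inv_nth_1[OF h0] h1)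
  have "fps_X * inverse (1 + fps_X * R_fps c) = fps_X * inverse (1 + fps_X * r)"
    using fps_inv_G_fps[OF u] fps_inv_fps_inv[OF h0] h1 by (simp add: G h_def)
  then have "inverse (inverse (1 + fps_X * R_fps c)) = inverse (inverse (1 + fps_X * r))"
    by simp
  then have "R_fps c = r"
    by simp
  with u show ?thesis by blast
qed

lemma R_fps_unique: "\<exists>!c. unital c \<and> R_fps c = r"
  using R_fps_surj R_fps_inj by blast

lemma unital_R_fps_free_conv: "unital (free_conv a b) \<and> R_fps (free_conv a b) = R_fps a + R_fps b"
  unfolding free_conv_def by (rule theI'[OF R_fps_unique])

lemma unital_R_fps_free_semigroup:
  "unital (free_semigroup \<mu> t) \<and> R_fps (free_semigroup \<mu> t) = fps_const (of_real t) * R_fps \<mu>"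
  unfolding free_semigroup_def by (rule theI'[OF R_fps_unique])

lemma free_semigroup_add:
  "free_conv (free_semigroup \<mu> t) (free_semigroup \<mu> s) = free_semigroup \<mu> (t + s)"
  by (rule R_fps_inj) (simp_all add: unital_R_fps_free_conv unital_R_fps_free_semigroup distrib_right flip: fps_const_add)

text \<open>In the variable \<open>w = 1/z\<close> this is \<open>1/\<omega>\<close> for the subordination function
  \<open>\<omega>(z) = z - R\<^sub>a(G\<^sub>c(z))\<close> of \<open>c = a \<boxplus> b\<close>, with \<open>r = R\<^sub>a\<close> and \<open>Y = G\<^sub>c\<close>.\<close>
definition subordination :: "complex fps \<Rightarrow> complex fps \<Rightarrow> complex fps" where
  "subordination r Y = fps_X * inverse (1 - fps_X * (r oo Y))"

lemma subordination_nth_0 [simp]: "subordination r Y $ 0 = 0"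
  by (simp add: subordination_def)

lemma fps_inv_G_fps_compose:
  assumes "unital b" and Y0: "Y $ 0 = 0"
  shows "fps_inv (G_fps b) oo Y = Y * inverse (1 + Y * (R_fps b oo Y))"
proof -
  have "fps_inv (G_fps b) oo Y = (fps_X oo Y) * (inverse (1 + fps_X * R_fps b) oo Y)"
    unfolding fps_inv_G_fps[OF assms(1)] by (rule fps_compose_mult_distrib[OF Y0])
  also have "\<dots> = Y * inverse (1 + Y * (R_fps b oo Y))"
    using Y0 by (simp add: fps_inverse_compose fps_compose_add_distrib fps_compose_mult_distrib)
  finally show ?thesis .
qed

lemma fps_inv_G_fps_compose_free_conv:
  fixes a b :: functional
  assumes "unital b"
  defines "Y \<equiv> G_fps (free_conv a b)"
  shows "fps_inv (G_fps b) oo Y = subordination (R_fps a) Y"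
proof -
  have uc: "unital (free_conv a b)" and R: "R_fps (free_conv a b) = R_fps a + R_fps b"
    using unital_R_fps_free_conv by auto
  have Y0: "Y $ 0 = 0" by (simp add: Y_def)
  define P where "P = 1 + Y * (R_fps b oo Y)"
  define Q where "Q = P + Y * (R_fps a oo Y)"
  define F where "F = 1 - fps_X * (R_fps a oo Y)"
  have P0: "P $ 0 = 1" and Q0: "Q $ 0 = 1" and F0: "F $ 0 = 1"
    by (simp_all add: P_def Q_def F_def Y0)
  have "fps_X = fps_inv (G_fps (free_conv a b)) oo Y"
    using fps_inv[of "G_fps (free_conv a b)"] uc by (simp add: Y_def)
  also have "\<dots> = Y * inverse Q"
  proof -
    have "1 + Y * (R_fps (free_conv a b) oo Y) = Q"
      by (simp add: R P_def Q_def fps_compose_add_distrib distrib_left)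
    then show ?thesis
      using fps_inv_G_fps_compose[OF uc Y0] by simp
  qed
  finally have "fps_X * Q = Y * (inverse Q * Q)"
    by (simp add: mult.assoc)
  then have "fps_X * Q = Y"
    using Q0 by (simp add: inverse_mult_eq_1)
  then have YF: "Y * F = fps_X * P"
    by (simp add: F_def Q_def algebra_simps)
  have "Y * inverse P = Y * inverse P * (F * inverse F)"
    using F0 by (simp add: inverse_mult_eq_1')
  also have "\<dots> = (Y * F) * inverse P * inverse F"
    by (simp only: ac_simps)
  also have "\<dots> = fps_X * (P * inverse P) * inverse F"
    by (simp only: YF mult.assoc)
  also have "\<dots> = fps_X * inverse F"
    using P0 by (simp add: inverse_mult_eq_1')
  finally have "Y * inverse P = fps_X * inverse F" .
  then show ?thesis
    by (simp only: fps_inv_G_fps_compose[OF assms(1) Y0] subordination_def P_def F_def)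
qed

lemma G_fps_free_conv_subordination:
  assumes "unital b"
  shows "G_fps (free_conv a b) = G_fps b oo subordination (R_fps a) (G_fps (free_conv a b))"
proof -
  have "G_fps b oo (fps_inv (G_fps b) oo G_fps (free_conv a b))
      = (G_fps b oo fps_inv (G_fps b)) oo G_fps (free_conv a b)"
    by (rule fps_compose_assoc) simp_all
  then show ?thesis
    using fps_inv_right[of "G_fps b"] assms by (simp add: fps_inv_G_fps_compose_free_conv)
qed

lemma fps_cutoff_subordination_cong:
  assumes "fps_cutoff n Y = fps_cutoff n Y'"
  shows "fps_cutoff (Suc n) (subordination r Y) = fps_cutoff (Suc n) (subordination r Y')"
proof -
  have "fps_cutoff (Suc n) (1 - fps_X * (r oo Y)) = fps_cutoff (Suc n) (1 - fps_X * (r oo Y'))"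
    using fps_cutoff_fps_X_mult_cong[OF fps_cutoff_compose_cong[OF refl assms]]
    by (simp add: fps_cutoff_diff)
  then have "fps_cutoff (Suc n) (inverse (1 - fps_X * (r oo Y)))
      = fps_cutoff (Suc n) (inverse (1 - fps_X * (r oo Y')))"
    by (rule fps_cutoff_inverse_cong) simp
  then have "fps_cutoff (Suc (Suc n)) (subordination r Y) = fps_cutoff (Suc (Suc n)) (subordination r Y')"
    unfolding subordination_def by (rule fps_cutoff_fps_X_mult_cong)
  then show ?thesis
    by (rule fps_cutoff_eq_mono) simp
qed

text \<open>This makes the fixed point equation \<open>Y = A \<circ> \<omega>(Y)\<close> triangular: it determines \<open>Y\<close>
  coefficient by coefficient.\<close>
lemma compose_subordination_nth_cong:
  assumes "fps_cutoff n Y = fps_cutoff n Y'"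
  shows "(A oo subordination r Y) $ n = (A oo subordination r Y') $ n"
  using fps_cutoff_compose_cong[OF refl fps_cutoff_subordination_cong[OF assms], of A r]
  by (simp only: fps_cutoff_eq_fps_cutoff_iff lessI)

section \<open>Coefficientwise derivatives of families of power series\<close>

definition has_coeff_deriv :: "(real \<Rightarrow> complex fps) \<Rightarrow> complex fps \<Rightarrow> bool" where
  "has_coeff_deriv F F' \<longleftrightarrow> (\<forall>n. ((\<lambda>e. F e $ n) has_vector_derivative F' $ n) (at 0))"

lemma has_coeff_deriv_unique: "has_coeff_deriv F A \<Longrightarrow> has_coeff_deriv F B \<Longrightarrow> A = B"
  unfolding has_coeff_deriv_def by (metis fps_ext vector_derivative_unique_at)

lemma ex_has_coeff_deriv_iff:
  "(\<exists>F'. has_coeff_deriv F F') \<longleftrightarrow> (\<forall>n. (\<lambda>e. F e $ n) differentiable (at 0))"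
proof
  assume "\<forall>n. (\<lambda>e. F e $ n) differentiable (at 0)"
  then have "has_coeff_deriv F (Abs_fps (\<lambda>n. vector_derivative (\<lambda>e. F e $ n) (at 0)))"
    by (simp add: has_coeff_deriv_def vector_derivative_works)
  then show "\<exists>F'. has_coeff_deriv F F'" ..
qed (auto simp: has_coeff_deriv_def intro: differentiableI_vector)

lemma has_coeff_deriv_const: "has_coeff_deriv (\<lambda>e. A) 0"
  by (simp add: has_coeff_deriv_def)

lemma has_coeff_deriv_of_real: "has_coeff_deriv (\<lambda>e. fps_const (of_real e)) 1"
  unfolding has_coeff_deriv_def
proof
  fix n
  show "((\<lambda>e. fps_const (of_real e) $ n) has_vector_derivative 1 $ n) (at 0)"
    using has_vector_derivative_of_real[OF DERIV_ident, of "at 0"] by (cases "n = 0") simp_all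
qed

lemma has_coeff_deriv_add:
  "has_coeff_deriv F A \<Longrightarrow> has_coeff_deriv G B \<Longrightarrow> has_coeff_deriv (\<lambda>e. F e + G e) (A + B)"
  by (simp add: has_coeff_deriv_def has_vector_derivative_add)

lemma has_coeff_deriv_diff:
  "has_coeff_deriv F A \<Longrightarrow> has_coeff_deriv G B \<Longrightarrow> has_coeff_deriv (\<lambda>e. F e - G e) (A - B)"
  by (simp add: has_coeff_deriv_def has_vector_derivative_diff)

lemma has_coeff_deriv_mult:
  assumes "has_coeff_deriv F A" "has_coeff_deriv G B"
  shows "has_coeff_deriv (\<lambda>e. F e * G e) (F 0 * B + A * G 0)"
  unfolding has_coeff_deriv_def
proof
  fix n
  have "((\<lambda>e. \<Sum>i=0..n. F e $ i * G e $ (n - i)) has_vector_derivative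
      (\<Sum>i=0..n. F 0 $ i * B $ (n - i) + A $ i * G 0 $ (n - i))) (at 0)"
    by (intro has_vector_derivative_sum has_vector_derivative_mult)
      (use assms in \<open>auto simp: has_coeff_deriv_def\<close>)
  then show "((\<lambda>e. (F e * G e) $ n) has_vector_derivative (F 0 * B + A * G 0) $ n) (at 0)"
    by (simp add: fps_mult_nth sum.distrib)
qed

lemma has_coeff_deriv_cmult: "has_coeff_deriv F A \<Longrightarrow> has_coeff_deriv (\<lambda>e. C * F e) (C * A)"
  using has_coeff_deriv_mult[OF has_coeff_deriv_const[of C]] by simp

lemma has_coeff_deriv_sum:
  assumes "\<And>i. i \<in> I \<Longrightarrow> has_coeff_deriv (F i) (A i)"
  shows "has_coeff_deriv (\<lambda>e. \<Sum>i\<in>I. F i e) (\<Sum>i\<in>I. A i)"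
  unfolding has_coeff_deriv_def
proof
  fix n
  have "((\<lambda>e. \<Sum>i\<in>I. F i e $ n) has_vector_derivative (\<Sum>i\<in>I. A i $ n)) (at 0)"
    by (intro has_vector_derivative_sum) (use assms in \<open>auto simp: has_coeff_deriv_def\<close>)
  then show "((\<lambda>e. (\<Sum>i\<in>I. F i e) $ n) has_vector_derivative (\<Sum>i\<in>I. A i) $ n) (at 0)"
    by (simp add: fps_sum_nth)
qed

lemma has_coeff_deriv_power:
  assumes "has_coeff_deriv F A"
  shows "has_coeff_deriv (\<lambda>e. F e ^ k) (of_nat k * F 0 ^ (k - 1) * A)"
proof (induction k)
  case 0
  then show ?case using has_coeff_deriv_const[of 1] by simp
next
  case (Suc k)
  have "F 0 * (of_nat k * F 0 ^ (k - 1) * A) + A * F 0 ^ k = of_nat (Suc k) * F 0 ^ (Suc k - 1) * A"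
    by (cases k) (simp_all add: algebra_simps)
  then show ?case
    using has_coeff_deriv_mult[OF assms Suc] by simp
qed

lemma has_coeff_deriv_nth_0:
  assumes "has_coeff_deriv F A" and "\<And>e. F e $ 0 = 0"
  shows "A $ 0 = 0"
proof -
  have "((\<lambda>e. F e $ 0) has_vector_derivative A $ 0) (at 0)"
    using assms(1) by (simp add: has_coeff_deriv_def)
  moreover have "((\<lambda>e. F e $ 0) has_vector_derivative 0) (at 0)"
    using assms(2) by simp
  ultimately show ?thesis
    using vector_derivative_unique_at by blast
qed

lemma has_coeff_deriv_compose:
  assumes d: "has_coeff_deriv B B'" and B0: "\<And>e. B e $ 0 = 0"
  shows "has_coeff_deriv (\<lambda>e. A oo B e) ((fps_deriv A oo B 0) * B')"
  unfolding has_coeff_deriv_def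
proof
  fix n
  \<comment> \<open>Coefficient \<open>n\<close> of \<open>A \<circ> B e\<close> only sees the truncation of \<open>A\<close> to degree \<open>n\<close>.\<close>
  define S where "S = (\<Sum>i=0..n. fps_const (A $ i) * (of_nat i * B 0 ^ (i - 1)))"
  have B'0: "B' $ 0 = 0"
    by (rule has_coeff_deriv_nth_0[OF d B0])
  have "has_coeff_deriv (\<lambda>e. \<Sum>i=0..n. fps_const (A $ i) * B e ^ i)
      (\<Sum>i=0..n. fps_const (A $ i) * (of_nat i * B 0 ^ (i - 1) * B'))"
    by (intro has_coeff_deriv_sum has_coeff_deriv_cmult has_coeff_deriv_power d)
  then have "((\<lambda>e. (\<Sum>i=0..n. fps_const (A $ i) * B e ^ i) $ n) has_vector_derivative (S * B') $ n) (at 0)"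
    by (simp add: has_coeff_deriv_def S_def sum_distrib_right mult.assoc)
  moreover have "(A oo B e) $ n = (\<Sum>i=0..n. fps_const (A $ i) * B e ^ i) $ n" for e
    by (simp add: fps_compose_nth fps_sum_nth)
  moreover have "fps_cutoff n S = fps_cutoff n (fps_deriv A oo B 0)"
    unfolding fps_cutoff_eq_fps_cutoff_iff
    using B0 by (simp add: fps_compose_deriv_nth_eq_sum S_def fps_sum_nth)
  then have "(S * B') $ n = ((fps_deriv A oo B 0) * B') $ n"
    by (rule fps_mult_nth_cutoff_cong[OF _ B'0])
  ultimately show "((\<lambda>e. (A oo B e) $ n) has_vector_derivative ((fps_deriv A oo B 0) * B') $ n) (at 0)"
    by simp
qed

lemma has_coeff_deriv_inverse:
  assumes d: "has_coeff_deriv F A" and F0: "\<And>e. F e $ 0 = 1"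
  shows "has_coeff_deriv (\<lambda>e. inverse (F e)) (- (A * inverse (F 0) ^ 2))"
proof -
  have "(\<lambda>e. inverse (F e) $ n) differentiable (at 0)" for n
  proof -
    have "has_coeff_deriv (\<lambda>e. \<Sum>k\<le>n. (1 - F e) ^ k) (\<Sum>k\<le>n. of_nat k * (1 - F 0) ^ (k - 1) * (0 - A))"
      by (intro has_coeff_deriv_sum has_coeff_deriv_power has_coeff_deriv_diff[OF has_coeff_deriv_const d])
    moreover have "inverse (F e) $ n = (\<Sum>k\<le>n. (1 - F e) ^ k) $ n" for e
      using fps_inverse_one_minus_nth[of "1 - F e" n] F0[of e] by simp
    ultimately have "((\<lambda>e. inverse (F e) $ n) has_vector_derivative
        (\<Sum>k\<le>n. of_nat k * (1 - F 0) ^ (k - 1) * (0 - A)) $ n) (at 0)"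
      by (simp add: has_coeff_deriv_def)
    then show ?thesis
      by (rule differentiableI_vector)
  qed
  then obtain I where dI: "has_coeff_deriv (\<lambda>e. inverse (F e)) I"
    using ex_has_coeff_deriv_iff by blast
  have "has_coeff_deriv (\<lambda>e. F e * inverse (F e)) (F 0 * I + A * inverse (F 0))"
    by (rule has_coeff_deriv_mult[OF d dI])
  moreover have "(\<lambda>e. F e * inverse (F e)) = (\<lambda>e. 1)"
    using F0 by (simp add: fun_eq_iff inverse_mult_eq_1')
  ultimately have "F 0 * I + A * inverse (F 0) = 0"
    using has_coeff_deriv_unique has_coeff_deriv_const by metis
  then have FI: "F 0 * I = - (A * inverse (F 0))"
    by (simp add: eq_neg_iff_add_eq_0)
  have "I = inverse (F 0) * (F 0 * I)"
    using F0 by (simp add: mult.assoc[symmetric] inverse_mult_eq_1)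
  also have "\<dots> = - (A * inverse (F 0) ^ 2)"
    by (simp only: FI) (simp add: power2_eq_square ac_simps)
  finally show ?thesis
    using dI by simp
qed

lemma has_coeff_deriv_subordination:
  assumes d: "has_coeff_deriv Y Y'" and Y0: "\<And>e. Y e $ 0 = 0"
  shows "has_coeff_deriv (\<lambda>e. subordination r (Y e))
           (subordination r (Y 0) ^ 2 * ((fps_deriv r oo Y 0) * Y'))"
proof -
  define W' where "W' = (fps_deriv r oo Y 0) * Y'"
  define F where "F = 1 - fps_X * (r oo Y 0)"
  have "has_coeff_deriv (\<lambda>e. 1 - fps_X * (r oo Y e)) (0 - fps_X * W')"
    unfolding W'_def
    by (intro has_coeff_deriv_diff has_coeff_deriv_const has_coeff_deriv_cmult
        has_coeff_deriv_compose d Y0)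
  then have "has_coeff_deriv (\<lambda>e. inverse (1 - fps_X * (r oo Y e))) (- ((0 - fps_X * W') * inverse F ^ 2))"
    unfolding F_def by (rule has_coeff_deriv_inverse) simp
  then have "has_coeff_deriv (\<lambda>e. subordination r (Y e)) (fps_X * (- ((0 - fps_X * W') * inverse F ^ 2)))"
    unfolding subordination_def by (rule has_coeff_deriv_cmult)
  moreover have "fps_X * (- ((0 - fps_X * W') * inverse F ^ 2)) = subordination r (Y 0) ^ 2 * W'"
    by (simp add: subordination_def F_def power2_eq_square algebra_simps)
  ultimately show ?thesis
    unfolding W'_def by (simp only:)
qed

lemma has_coeff_deriv_perturbed_compose_subordination:
  fixes Y :: "real \<Rightarrow> complex fps" and r A0 A1 :: "complex fps"
  assumes d: "has_coeff_deriv Y Y'" and Y0: "\<And>e. Y e $ 0 = 0"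
  defines "\<omega> \<equiv> subordination r (Y 0)"
  shows "has_coeff_deriv (\<lambda>e. (A0 + fps_const (of_real e) * A1) oo subordination r (Y e))
           ((A1 oo \<omega>) + (fps_deriv A0 oo \<omega>) * (\<omega> ^ 2 * ((fps_deriv r oo Y 0) * Y')))"
proof -
  define W where "W = \<omega> ^ 2 * ((fps_deriv r oo Y 0) * Y')"
  have d\<omega>: "has_coeff_deriv (\<lambda>e. subordination r (Y e)) W"
    unfolding W_def \<omega>_def by (rule has_coeff_deriv_subordination[OF d Y0])
  have "has_coeff_deriv (\<lambda>e. A oo subordination r (Y e)) ((fps_deriv A oo \<omega>) * W)" for A
    unfolding \<omega>_def by (rule has_coeff_deriv_compose[OF d\<omega>]) simp
  then have "has_coeff_deriv
      (\<lambda>e. (A0 oo subordination r (Y e)) + fps_const (of_real e) * (A1 oo subordination r (Y e)))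
      ((fps_deriv A0 oo \<omega>) * W + (fps_const (of_real 0) * ((fps_deriv A1 oo \<omega>) * W)
         + 1 * (A1 oo subordination r (Y 0))))"
    by (intro has_coeff_deriv_add has_coeff_deriv_mult has_coeff_deriv_of_real)
  moreover have "(\<lambda>e. (A0 + fps_const (of_real e) * A1) oo subordination r (Y e))
      = (\<lambda>e. (A0 oo subordination r (Y e)) + fps_const (of_real e) * (A1 oo subordination r (Y e)))"
    by (simp add: fun_eq_iff fps_compose_add_distrib fps_const_mult_apply_left)
  ultimately show ?thesis
    by (simp add: W_def \<omega>_def add.commute)
qed

lemma fixed_point_coeff_differentiable:
  assumes fixed: "\<And>e. g e = (A0 + fps_const (of_real e) * A1) oo subordination r (g e)"
    and g0: "\<And>e. g e $ 0 = 0"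
  shows "\<exists>\<delta>. has_coeff_deriv g \<delta>"
proof -
  have "\<forall>k<n. (\<lambda>e. g e $ k) differentiable (at 0)" for n
  proof (induction n)
    case (Suc n)
    define cut where "cut e = fps_cutoff n (g e)" for e
    have "(\<lambda>e. cut e $ k) differentiable (at 0)" for k
      using Suc.IH by (cases "k < n") (simp_all add: cut_def)
    then obtain C where C: "has_coeff_deriv cut C"
      using ex_has_coeff_deriv_iff by blast
    have cut0: "cut e $ 0 = 0" for e
      by (simp add: cut_def g0)
    have "(\<lambda>e. ((A0 + fps_const (of_real e) * A1) oo subordination r (cut e)) $ n) differentiable (at 0)"
      using has_coeff_deriv_perturbed_compose_subordination[OF C cut0]
      unfolding has_coeff_deriv_def by (blast intro: differentiableI_vector)
    moreover have "((A0 + fps_const (of_real e) * A1) oo subordination r (cut e)) $ n = g e $ n" for e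
    proof -
      have "fps_cutoff n (cut e) = fps_cutoff n (g e)"
        by (rule fps_ext) (simp add: cut_def)
      then have "((A0 + fps_const (of_real e) * A1) oo subordination r (cut e)) $ n
          = ((A0 + fps_const (of_real e) * A1) oo subordination r (g e)) $ n"
        by (rule compose_subordination_nth_cong)
      then show ?thesis
        by (simp only: fixed[of e, symmetric])
    qed
    ultimately have "(\<lambda>e. g e $ n) differentiable (at 0)"
      by simp
    then show ?case
      using Suc.IH less_Suc_eq by auto
  qed simp
  then show ?thesis
    using ex_has_coeff_deriv_iff by blast
qed

lemma fixed_point_has_coeff_deriv:
  fixes g :: "real \<Rightarrow> complex fps" and r A0 A1 :: "complex fps"
  assumes fixed: "\<And>e. g e = (A0 + fps_const (of_real e) * A1) oo subordination r (g e)"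
    and g0: "\<And>e. g e $ 0 = 0"
  defines "\<omega> \<equiv> subordination r (g 0)"
  shows "\<exists>\<delta>. has_coeff_deriv g \<delta> \<and>
           \<delta> = (A1 oo \<omega>) + (fps_deriv A0 oo \<omega>) * (\<omega> ^ 2 * ((fps_deriv r oo g 0) * \<delta>))"
proof -
  obtain \<delta> where d: "has_coeff_deriv g \<delta>"
    using fixed_point_coeff_differentiable[OF fixed g0] by blast
  have "has_coeff_deriv (\<lambda>e. (A0 + fps_const (of_real e) * A1) oo subordination r (g e))
      ((A1 oo \<omega>) + (fps_deriv A0 oo \<omega>) * (\<omega> ^ 2 * ((fps_deriv r oo g 0) * \<delta>)))"
    unfolding \<omega>_def by (rule has_coeff_deriv_perturbed_compose_subordination[OF d g0])
  moreover have "(\<lambda>e. (A0 + fps_const (of_real e) * A1) oo subordination r (g e)) = g"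
    by (rule ext) (rule fixed[symmetric])
  ultimately show ?thesis
    using d has_coeff_deriv_unique by metis
qed

text \<open>Differentiate \<open>\<omega> (1 - w r(g\<^sub>0)) = w\<close> and multiply by \<open>w \<omega>\<close>.\<close>
lemma subordination_fixed_point_deriv_identity:
  fixes r g0 A0 :: "complex fps"
  defines "\<omega> \<equiv> subordination r g0"
  assumes g0: "g0 = A0 oo \<omega>" and A00: "A0 $ 0 = 0"
  shows "fps_X ^ 2 * fps_deriv \<omega> * (1 - (fps_deriv A0 oo \<omega>) * \<omega> ^ 2 * (fps_deriv r oo g0)) = \<omega> ^ 2"
proof -
  define W where "W = r oo g0"
  define F where "F = 1 - fps_X * W"
  define a where "a = fps_deriv A0 oo \<omega>"
  define q where "q = fps_deriv r oo g0"
  define D where "D = fps_deriv \<omega>"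
  have F0: "F $ 0 = 1"
    by (simp add: F_def)
  have \<omega>F: "\<omega> * F = fps_X"
    using F0 by (simp add: \<omega>_def subordination_def F_def W_def mult.assoc inverse_mult_eq_1)
  have \<omega>0: "\<omega> $ 0 = 0"
    by (simp add: \<omega>_def)
  have g00: "g0 $ 0 = 0"
    using g0 A00 by simp
  have dg: "fps_deriv g0 = a * D"
    using g0 fps_compose_deriv[OF \<omega>0, of A0] by (simp add: a_def D_def)
  have dF: "fps_deriv F = - (W + fps_X * (q * (a * D)))"
    by (simp add: F_def W_def q_def fps_compose_deriv[OF g00] dg algebra_simps)
  have h: "D * F + \<omega> * fps_deriv F = 1"
    using arg_cong[OF \<omega>F, of fps_deriv] by (simp add: D_def algebra_simps)
  have XW: "fps_X * W = 1 - F"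
    by (simp add: F_def)
  have "fps_X * \<omega> = fps_X * \<omega> * (D * F + \<omega> * fps_deriv F)"
    by (simp add: h)
  also have "\<dots> = fps_X * D * (\<omega> * F) - \<omega> * \<omega> * (fps_X * W) - fps_X ^ 2 * D * (a * \<omega> ^ 2 * q)"
    by (simp add: dF power2_eq_square algebra_simps)
  also have "\<dots> = fps_X * D * (\<omega> * F) - (\<omega> * \<omega> - \<omega> * (\<omega> * F)) - fps_X ^ 2 * D * (a * \<omega> ^ 2 * q)"
    by (simp only: XW right_diff_distrib mult_1_right mult.assoc)
  also have "\<dots> = fps_X * D * fps_X - (\<omega> * \<omega> - \<omega> * fps_X) - fps_X ^ 2 * D * (a * \<omega> ^ 2 * q)"
    by (simp only: \<omega>F)
  also have "\<dots> = fps_X ^ 2 * D * (1 - a * \<omega> ^ 2 * q) - \<omega> ^ 2 + fps_X * \<omega>"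
    by (simp add: power2_eq_square algebra_simps)
  finally show ?thesis
    unfolding a_def q_def D_def by simp
qed

lemma linearised_fixed_point_solution:
  fixes r g0 A0 A1 N \<delta> :: "complex fps"
  defines "\<omega> \<equiv> subordination r g0"
  assumes g0: "g0 = A0 oo \<omega>" and A00: "A0 $ 0 = 0"
    and \<delta>: "\<delta> = (A1 oo \<omega>) + (fps_deriv A0 oo \<omega>) * (\<omega> ^ 2 * ((fps_deriv r oo g0) * \<delta>))"
    and A1: "A1 = fps_X ^ 2 * fps_deriv N"
  shows "\<delta> = fps_X ^ 2 * fps_deriv (N oo \<omega>)"
proof -
  define L where "L = 1 - (fps_deriv A0 oo \<omega>) * \<omega> ^ 2 * (fps_deriv r oo g0)"
  have \<omega>0: "\<omega> $ 0 = 0"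
    by (simp add: \<omega>_def)
  have key: "fps_X ^ 2 * fps_deriv \<omega> * L = \<omega> ^ 2"
    unfolding L_def \<omega>_def by (rule subordination_fixed_point_deriv_identity[OF g0[unfolded \<omega>_def] A00])
  have "\<delta> * L = \<delta> - (fps_deriv A0 oo \<omega>) * (\<omega> ^ 2 * ((fps_deriv r oo g0) * \<delta>))"
    by (simp add: L_def algebra_simps)
  also have "\<dots> = A1 oo \<omega>"
    by (simp only: diff_eq_eq) (rule \<delta>)
  also have "\<dots> = \<omega> ^ 2 * (fps_deriv N oo \<omega>)"
    by (simp add: A1 fps_compose_mult_distrib[OF \<omega>0] fps_X_power_compose[OF \<omega>0])
  finally have \<delta>L: "\<delta> * L = \<omega> ^ 2 * (fps_deriv N oo \<omega>)" .
  have "\<delta> * \<omega> ^ 2 = fps_X ^ 2 * fps_deriv \<omega> * (\<delta> * L)"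
    by (simp flip: key add: ac_simps)
  also have "\<dots> = (fps_X ^ 2 * fps_deriv \<omega> * (fps_deriv N oo \<omega>)) * \<omega> ^ 2"
    by (simp only: \<delta>L) (simp add: ac_simps)
  finally have "\<delta> * \<omega> ^ 2 = (fps_X ^ 2 * fps_deriv \<omega> * (fps_deriv N oo \<omega>)) * \<omega> ^ 2" .
  moreover have "\<omega> ^ 2 \<noteq> 0"
  proof -
    have "\<omega> $ 1 = 1"
      by (simp add: \<omega>_def subordination_def)
    then show ?thesis
      by auto
  qed
  ultimately have "\<delta> = fps_X ^ 2 * fps_deriv \<omega> * (fps_deriv N oo \<omega>)"
    by simp
  then show ?thesis
    by (simp add: fps_compose_deriv[OF \<omega>0] ac_simps)
qed

section \<open>The Gateaux derivative of \<open>C\<^sub>t\<close>\<close>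

text \<open>The functional \<open>q \<mapsto> \<langle>m, \<integral>\<^sub>0\<^sup>x q\<rangle>\<close>.\<close>
definition integral_functional :: "functional \<Rightarrow> functional" where
  "integral_functional m k = m (Suc k) / of_nat (Suc k)"

lemma G_fps_eq_fps_X2_deriv:
  assumes "m 0 = 0"
  shows "G_fps m = fps_X ^ 2 * fps_deriv (G_fps (integral_functional m))"
proof (rule fps_ext)
  fix n
  show "G_fps m $ n = (fps_X ^ 2 * fps_deriv (G_fps (integral_functional m))) $ n"
  proof (cases n)
    case (Suc k)
    then show ?thesis
      using assms by (cases k) (simp_all add: fps_X_power_mult_nth G_fps_nth integral_functional_def
          del: of_nat_Suc)
  qed (simp add: fps_X_power_mult_nth)
qed

lemma has_vector_derivative_imp_difference_quotient:
  fixes f :: "real \<Rightarrow> complex"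
  assumes "(f has_vector_derivative D) (at 0)"
  shows "((\<lambda>e. (f e - f 0) / of_real e) \<longlongrightarrow> D) (at 0)"
proof -
  have lim: "((\<lambda>h. norm (f (0 + h) - f 0 - h *\<^sub>R D) / norm h) \<longlongrightarrow> 0) (at 0)"
    using assms by (simp add: has_vector_derivative_def has_derivative_at)
  have "norm (f (0 + h) - f 0 - h *\<^sub>R D) / norm h = norm ((f h - f 0) / of_real h - D)"
    if "h \<noteq> 0" for h :: real
  proof -
    have "(f h - f 0) / of_real h - D = (f h - f 0 - h *\<^sub>R D) / of_real h"
      using that by (simp add: scaleR_conv_of_real field_simps)
    then show ?thesis
      by (simp add: norm_divide)
  qed
  then have "\<forall>\<^sub>F h in at 0. norm (f (0 + h) - f 0 - h *\<^sub>R D) / norm h = norm ((f h - f 0) / of_real h - D)"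
    unfolding eventually_at_filter by (intro always_eventually) simp
  with lim have "((\<lambda>h. norm ((f h - f 0) / of_real h - D)) \<longlongrightarrow> 0) (at 0)"
    by (rule Lim_transform_eventually)
  then show ?thesis
    by (simp add: Lim_null[symmetric] tendsto_norm_zero_iff)
qed

lemma has_gateaux_deriv_if_has_coeff_deriv:
  assumes "has_coeff_deriv (\<lambda>e. G_fps (Cmap \<mu> t (\<lambda>k. \<tau> k + of_real e * \<nu> k))) \<delta>"
  shows "has_gateaux_deriv \<mu> t \<tau> \<nu> (\<lambda>n. \<delta> $ Suc n)"
  unfolding has_gateaux_deriv_def
proof
  fix n
  have "((\<lambda>e. Cmap \<mu> t (\<lambda>k. \<tau> k + of_real e * \<nu> k) n) has_vector_derivative \<delta> $ Suc n) (at 0)"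
    using assms[unfolded has_coeff_deriv_def, rule_format, of "Suc n"] by (simp add: G_fps_nth)
  from has_vector_derivative_imp_difference_quotient[OF this]
  show "((\<lambda>e. (Cmap \<mu> t (\<lambda>k. \<tau> k + of_real e * \<nu> k) n - Cmap \<mu> t \<tau> n) / of_real e)
      \<longlongrightarrow> \<delta> $ Suc n) (at 0)"
    by simp
qed

lemma has_gateaux_deriv_Cmap:
  fixes \<mu> \<tau> \<nu> :: functional and t :: real
  assumes "unital \<tau>" and "\<nu> 0 = 0"
  defines "\<Psi> \<equiv> fps_inv (G_fps \<tau>) oo G_fps (Cmap \<mu> t \<tau>)"
  shows "has_gateaux_deriv \<mu> t \<tau> \<nu>
           (\<lambda>n. (fps_X ^ 2 * fps_deriv (G_fps (integral_functional \<nu>) oo \<Psi>)) $ Suc n)"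
proof -
  define \<mu>t where "\<mu>t = free_semigroup \<mu> t"
  define \<tau>e where "\<tau>e = (\<lambda>(e::real) k. \<tau> k + of_real e * \<nu> k)"
  define g where "g = (\<lambda>e. G_fps (Cmap \<mu> t (\<tau>e e)))"
  have u\<tau>e: "unital (\<tau>e e)" for e
    using assms by (simp add: unital_def \<tau>e_def)
  have G\<tau>e: "G_fps (\<tau>e e) = G_fps \<tau> + fps_const (of_real e) * G_fps \<nu>" for e
    by (rule fps_ext) (simp add: G_fps_nth \<tau>e_def)
  have fixed: "g e = (G_fps \<tau> + fps_const (of_real e) * G_fps \<nu>) oo subordination (R_fps \<mu>t) (g e)" for e
    unfolding g_def Cmap_def \<mu>t_def G\<tau>e[symmetric] by (rule G_fps_free_conv_subordination[OF u\<tau>e])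
  have g0: "g e $ 0 = 0" for e
    by (simp add: g_def)
  obtain \<delta> where d\<delta>: "has_coeff_deriv g \<delta>" and \<delta>:
    "\<delta> = (G_fps \<nu> oo subordination (R_fps \<mu>t) (g 0)) + (fps_deriv (G_fps \<tau>) oo subordination (R_fps \<mu>t) (g 0))
          * (subordination (R_fps \<mu>t) (g 0) ^ 2 * ((fps_deriv (R_fps \<mu>t) oo g 0) * \<delta>))"
    using fixed_point_has_coeff_deriv[OF fixed g0] by blast
  have \<tau>e0: "\<tau>e 0 = \<tau>"
    by (simp add: \<tau>e_def)
  have \<Psi>: "subordination (R_fps \<mu>t) (g 0) = \<Psi>"
    using fps_inv_G_fps_compose_free_conv[OF assms(1), of \<mu>t]
    by (simp add: \<Psi>_def g_def \<tau>e0 Cmap_def \<mu>t_def)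
  have "g 0 = G_fps \<tau> oo subordination (R_fps \<mu>t) (g 0)"
    using fixed[of 0] by simp
  then have \<delta>_eq: "\<delta> = fps_X ^ 2 * fps_deriv (G_fps (integral_functional \<nu>) oo \<Psi>)"
    using linearised_fixed_point_solution[OF _ _ \<delta> G_fps_eq_fps_X2_deriv[of \<nu>, OF assms(2)]]
    unfolding \<Psi> by simp
  have "has_gateaux_deriv \<mu> t \<tau> \<nu> (\<lambda>n. \<delta> $ Suc n)"
    by (rule has_gateaux_deriv_if_has_coeff_deriv) (use d\<delta> in \<open>simp add: g_def \<tau>e_def\<close>)
  then show ?thesis
    unfolding \<delta>_eq .
qed

section \<open>The kernel operator and martingale polynomials\<close>

lemma lift_fps_nth [simp]: "lift_fps f $ n = [:f $ n:]"
  by (simp add: lift_fps_def)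

lemma lift_fps_add: "lift_fps (a + b) = lift_fps a + lift_fps b"
  by (rule fps_ext) simp

lemma lift_fps_one: "lift_fps 1 = 1"
  by (rule fps_ext) (simp add: one_pCons)

lemma lift_fps_mult: "lift_fps (a * b) = lift_fps a * lift_fps b"
  by (rule fps_ext) (simp add: fps_mult_nth sum_to_poly mult.commute)

lemma lift_fps_power: "lift_fps (a ^ k) = lift_fps a ^ k"
  by (induction k) (simp_all add: lift_fps_one lift_fps_mult)

text \<open>\<open>Res\<^sub>z(x) = 1/(z - x) = w/(1 - x w)\<close> in the variable \<open>w = 1/z\<close>,
  as a power series in \<open>w\<close> with polynomial coefficients in \<open>x\<close>.\<close>
definition resolvent_fps :: "complex poly fps" where
  "resolvent_fps = Abs_fps (\<lambda>k. if k = 0 then 0 else [:0, 1:] ^ (k - 1))"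

lemma one_minus_x_mult_resolvent_fps: "(1 - fps_const [:0, 1:] * fps_X) * resolvent_fps = fps_X"
proof (rule fps_ext)
  fix n
  show "((1 - fps_const [:0, 1:] * fps_X) * resolvent_fps) $ n = fps_X $ n"
  proof (cases n)
    case (Suc k)
    then show ?thesis
      by (cases k) (simp_all add: resolvent_fps_def algebra_simps)
  qed (simp add: resolvent_fps_def)
qed

lemma kernel_coeffs_THE:
  fixes g R \<Psi> :: "complex fps"
  assumes g0: "g $ 0 = 0" and \<Psi>: "\<Psi> = g * inverse (1 + g * (R oo g))"
  shows "(THE c. fps_X * c * (1 + lift_fps (g * (R oo g)) - fps_const [:0, 1:] * lift_fps g) = lift_fps g)
      = fps_shift 1 (resolvent_fps oo lift_fps \<Psi>)"
proof -
  define A where "A = 1 + g * (R oo g)"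
  define x where "x = (fps_const [:0, 1:] :: complex poly fps)"
  define den where "den = 1 + lift_fps (g * (R oo g)) - x * lift_fps g"
  define l where "l = lift_fps \<Psi>"
  define c where "c = fps_shift 1 (resolvent_fps oo l)"
  have A0: "A $ 0 = 1"
    by (simp add: A_def g0)
  have \<Psi>A: "\<Psi> * A = g"
    using A0 by (simp add: \<Psi> A_def[symmetric] mult.assoc inverse_mult_eq_1)
  have l0: "l $ 0 = 0"
    using A0 g0 by (simp add: l_def \<Psi> A_def[symmetric])
  have den: "den = lift_fps A * (1 - x * l)"
  proof -
    have "lift_fps g = l * lift_fps A"
      using \<Psi>A by (simp add: l_def lift_fps_mult[symmetric])
    then show ?thesis
      by (simp add: den_def A_def lift_fps_add lift_fps_one algebra_simps)
  qed
  have "(1 - x * l) * (resolvent_fps oo l) = l"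
  proof -
    have "((1 - x * fps_X) * resolvent_fps) oo l = l"
      using l0 by (simp add: x_def one_minus_x_mult_resolvent_fps)
    then show ?thesis
      using l0 by (simp add: fps_compose_mult_distrib fps_compose_sub_distrib x_def
          fps_const_mult_apply_left[symmetric])
  qed
  moreover have "fps_X * c = resolvent_fps oo l"
    unfolding c_def by (rule fps_X_mult_fps_shift_1) (simp add: resolvent_fps_def)
  ultimately have sat: "fps_X * c * den = lift_fps g"
    by (simp add: den l_def \<Psi>A[symmetric] lift_fps_mult ac_simps)
  have "fps_X * den \<noteq> 0"
  proof -
    have "den $ 0 = 1"
      by (simp add: den_def g0 x_def)
    then show ?thesis
      by auto
  qed
  then have "(THE c. fps_X * c * den = lift_fps g) = c"
  proof (intro the_equality sat)
    fix c' assume "fps_X * c' * den = lift_fps g"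
    then have "c' * (fps_X * den) = c * (fps_X * den)"
      using sat by (simp add: ac_simps)
    then show "c' = c"
      using \<open>fps_X * den \<noteq> 0\<close> by simp
  qed
  then show ?thesis
    by (simp add: den_def x_def c_def l_def)
qed

lemma kernel_coeffs_eq:
  "kernel_coeffs \<mu> s t = fps_shift 1 (resolvent_fps oo
     lift_fps (fps_inv (G_fps (free_semigroup \<mu> s)) oo G_fps (free_semigroup \<mu> t)))"
  unfolding kernel_coeffs_def Let_def
  by (rule kernel_coeffs_THE) (simp_all add: fps_inv_G_fps_compose unital_R_fps_free_semigroup)

lemma pair_bound: "degree q \<le> N \<Longrightarrow> pair m q = (\<Sum>n\<le>N. coeff q n * m n)"
  unfolding pair_def by (rule sum.mono_neutral_left) (auto simp: coeff_eq_0)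

lemma pair_add: "pair m (p + q) = pair m p + pair m q"
proof -
  define N where "N = max (degree p) (degree q)"
  have "degree (p + q) \<le> N" "degree p \<le> N" "degree q \<le> N"
    by (auto simp: N_def intro: degree_add_le)
  then show ?thesis
    by (simp add: pair_bound sum.distrib algebra_simps)
qed

lemma pair_smult: "pair m (smult a q) = a * pair m q"
  using degree_smult_le[of a q]
  by (simp add: pair_bound[of _ "degree q"] sum_distrib_left mult.assoc)

lemma pair_sum: "pair m (\<Sum>i\<in>I. f i) = (\<Sum>i\<in>I. pair m (f i))"
  by (induction I rule: infinite_finite_induct) (simp_all add: pair_add pair_def[of _ 0])

lemma pair_monom: "pair m (monom b k) = b * m k"
proof -
  have "pair m (monom b k) = (\<Sum>n\<le>k. coeff (monom b k) n * m n)"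
    by (rule pair_bound[OF degree_monom_le])
  also have "\<dots> = (\<Sum>n\<le>k. if n = k then b * m k else 0)"
    by (intro sum.cong refl) auto
  finally show ?thesis
    by simp
qed

lemma pair_delta: "pair (\<lambda>n. if n = k then 1 else 0) q = coeff q k"
proof -
  have "pair (\<lambda>n. if n = k then 1 else 0) q = (\<Sum>n\<le>max k (degree q). coeff q n * (if n = k then 1 else 0))"
    by (rule pair_bound) simp
  also have "\<dots> = (\<Sum>n\<le>max k (degree q). if n = k then coeff q k else 0)"
    by (intro sum.cong refl) auto
  finally show ?thesis
    by simp
qed

lemma poly_eq_by_pair: "(\<And>m. pair m p = pair m q) \<Longrightarrow> p = q"
  by (metis poly_eqI pair_delta)

lemma pair_fps_shift_resolvent_compose:
  assumes "\<Psi> $ 0 = 0"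
  shows "pair m (fps_shift 1 (resolvent_fps oo lift_fps \<Psi>) $ j) = (G_fps m oo \<Psi>) $ Suc j"
proof -
  have "fps_shift 1 (resolvent_fps oo lift_fps \<Psi>) $ j
      = (\<Sum>i=0..Suc j. if i = 0 then 0 else monom ((\<Psi> ^ i) $ Suc j) (i - 1))"
    unfolding fps_shift_nth fps_compose_nth
    by (intro sum.cong refl) (auto simp: resolvent_fps_def lift_fps_power[symmetric] monom_altdef)
  then have "pair m (fps_shift 1 (resolvent_fps oo lift_fps \<Psi>) $ j)
      = (\<Sum>i=0..Suc j. pair m (if i = 0 then 0 else monom ((\<Psi> ^ i) $ Suc j) (i - 1)))"
    by (simp only: pair_sum)
  also have "\<dots> = (\<Sum>i=0..Suc j. G_fps m $ i * (\<Psi> ^ i) $ Suc j)"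
    by (intro sum.cong refl) (auto simp: pair_monom pair_def[of _ 0] G_fps_nth mult.commute)
  finally show ?thesis
    by (simp only: fps_compose_nth)
qed

lemma pair_kernel_coeffs:
  "pair m (kernel_coeffs \<mu> s t $ j)
     = (G_fps m oo (fps_inv (G_fps (free_semigroup \<mu> s)) oo G_fps (free_semigroup \<mu> t))) $ Suc j"
  unfolding kernel_coeffs_eq by (rule pair_fps_shift_resolvent_compose) simp

lemma pair_Kop:
  "pair m (Kop \<mu> s t q) = (\<Sum>n\<le>degree q. coeff q n * pair m (kernel_coeffs \<mu> s t $ n))"
  by (simp add: Kop_def pair_sum pair_smult)

lemma Kop_same_time: "Kop \<mu> s s q = q"
proof (rule poly_eq_by_pair)
  fix m
  have "fps_inv (G_fps (free_semigroup \<mu> s)) oo G_fps (free_semigroup \<mu> s) = fps_X"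
    using fps_inv[of "G_fps (free_semigroup \<mu> s)"] unital_R_fps_free_semigroup by simp
  then have "pair m (Kop \<mu> s s q) = (\<Sum>n\<le>degree q. coeff q n * m n)"
    by (simp add: pair_Kop pair_kernel_coeffs G_fps_nth)
  then show "pair m (Kop \<mu> s s q) = pair m q"
    by (simp only: pair_def)
qed

lemma Kop_martingale:
  assumes "martingale_poly \<mu> p" and "0 \<le> s" and "s \<le> t"
  shows "Kop \<mu> s t (p t) = p s"
proof (cases "s = t")
  case True
  then show ?thesis
    by (simp add: Kop_same_time)
next
  case False
  then show ?thesis
    using assms by (simp add: martingale_poly_def)
qed

lemma pair_pderiv_integral_functional:
  assumes "m 0 = 0"
  shows "pair (integral_functional m) (pderiv q) = pair m q"
proof -
  have "pair m q = (\<Sum>n\<le>Suc (degree q). coeff q n * m n)"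
    by (rule pair_bound) simp
  also have "\<dots> = (\<Sum>j\<le>degree q. coeff q (Suc j) * m (Suc j))"
    by (subst sum.atMost_Suc_shift) (simp add: assms)
  also have "\<dots> = (\<Sum>j\<le>degree q. coeff (pderiv q) j * integral_functional m j)"
    by (intro sum.cong refl) (simp add: coeff_pderiv integral_functional_def del: of_nat_Suc)
  also have "\<dots> = pair (integral_functional m) (pderiv q)"
    by (rule pair_bound[symmetric]) (simp add: degree_pderiv)
  finally show ?thesis ..
qed

lemma pair_deriv_compose_kernel:
  fixes \<mu> m :: functional and s t :: real
  defines "\<Psi> \<equiv> fps_inv (G_fps (free_semigroup \<mu> s)) oo G_fps (free_semigroup \<mu> t)"
  shows "pair (\<lambda>n. (fps_X ^ 2 * fps_deriv (G_fps m oo \<Psi>)) $ Suc n) q = pair m (Kop \<mu> s t (pderiv q))"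
proof -
  define D where "D = (\<lambda>n. (fps_X ^ 2 * fps_deriv (G_fps m oo \<Psi>)) $ Suc n)"
  define N where "N = degree q"
  have D0: "D 0 = 0"
    by (simp add: D_def fps_X_power_mult_nth)
  have DSuc: "D (Suc j) = of_nat (Suc j) * pair m (kernel_coeffs \<mu> s t $ j)" for j
    by (simp add: D_def fps_X_power_mult_nth pair_kernel_coeffs \<Psi>_def)
  have "pair D q = (\<Sum>n\<le>Suc N. coeff q n * D n)"
    by (rule pair_bound) (simp add: N_def)
  also have "\<dots> = (\<Sum>j\<le>N. coeff (pderiv q) j * pair m (kernel_coeffs \<mu> s t $ j))"
    by (subst sum.atMost_Suc_shift) (simp add: D0 DSuc coeff_pderiv ac_simps)
  also have "\<dots> = pair m (Kop \<mu> s t (pderiv q))"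
    unfolding pair_Kop
    by (rule sum.mono_neutral_right) (auto simp: N_def degree_pderiv coeff_eq_0)
  finally show ?thesis
    by (simp only: D_def)
qed

theorem proposition4p5:
  fixes \<mu> \<nu> :: functional and p g :: "real \<Rightarrow> complex poly" and s t :: real
  assumes "freely_inf_div \<mu>"
    and "martingale_poly \<mu> p"
    and "\<forall>r\<ge>0. pderiv (g r) = p r"
    and "centered \<nu>"
    and "0 \<le> s" and "0 \<le> t"
  shows "\<exists>D. has_gateaux_deriv \<mu> t (free_semigroup \<mu> s) \<nu> D \<and>
             pair D (g (t + s)) = pair \<nu> (g s)"
proof -
  define \<Psi> where "\<Psi> = fps_inv (G_fps (free_semigroup \<mu> s)) oo G_fps (free_semigroup \<mu> (t + s))"
  define D where "D = (\<lambda>n. (fps_X ^ 2 * fps_deriv (G_fps (integral_functional \<nu>) oo \<Psi>)) $ Suc n)"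
  have \<nu>0: "\<nu> 0 = 0"
    using assms(4) by (simp add: centered_def)
  have gateaux: "has_gateaux_deriv \<mu> t (free_semigroup \<mu> s) \<nu> D"
    using has_gateaux_deriv_Cmap[of "free_semigroup \<mu> s" \<nu> \<mu> t] unital_R_fps_free_semigroup \<nu>0
    by (simp add: D_def \<Psi>_def Cmap_def free_semigroup_add)
  have "pair D (g (t + s)) = pair (integral_functional \<nu>) (Kop \<mu> s (t + s) (pderiv (g (t + s))))"
    unfolding D_def \<Psi>_def by (rule pair_deriv_compose_kernel)
  also have "\<dots> = pair (integral_functional \<nu>) (p s)"
    using assms(2,3,5,6) Kop_martingale[of \<mu> p s "t + s"] by simp
  also have "\<dots> = pair \<nu> (g s)"
    using assms(3,5) pair_pderiv_integral_functional[of \<nu> "g s", OF \<nu>0] by simp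
  finally show ?thesis
    using gateaux by blast
qed

end
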